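(* Let $P\subseteq\mathbb{R}^n$ be a nonempty integral polyhedron of dimension smaller than $n$ such that no integer point lies in the relative interior of $P$. Then for each $k\in\mathbb{N}$ there exists a relaxation $Q$ of $P$ such that $Q^{(k)}$ is not contained in $\operatorname{aff}(P)$.
   Context: For a polyhedron $Q\subseteq\mathbb{R}^n$, $Q_I:=\operatorname{conv}(Q\cap\mathbb{Z}^n)$; $Q$ is integral if $Q=Q_I$. A relaxation of an integral polyhedron $P\subseteq\mathbb{R}^n$ is a rational polyhedron $Q\subseteq\mathbb{R}^n$ with $Q\cap\mathbb{Z}^n=P\cap\mathbb{Z}^n$. A CG inequality for $Q$ is $cx\le\lfloor\delta\rfloor$ with $c\in\mathbb{Z}^n$ and $cx\le\delta$ valid for $Q$. The CG closure $Q'$ is the set of points of $Q$ satisfying all CG inequalities for $Q$; $Q^{(0)}:=Q$, $Q^{(k)}:=(Q^{(k-1)})'$. $\operatorname{aff}(S)$ is the affine hull of $S$. *)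

theory Defs
  imports "HOL-Analysis.Analysis"
begin

definition int_vec :: "real^'n \<Rightarrow> bool" where
  "int_vec x \<longleftrightarrow> (\<forall>i. x $ i \<in> \<int>)"

definition int_points :: "(real^'n) set" where
  "int_points = {x. int_vec x}"

definition rational_polyhedron :: "(real^'n) set \<Rightarrow> bool" where
  "rational_polyhedron Q \<longleftrightarrow>
     (\<exists>F. finite F \<and> (\<forall>(a,b)\<in>F. (\<forall>i. a $ i \<in> \<rat>) \<and> b \<in> \<rat>) \<and>
          Q = {x. \<forall>(a,b)\<in>F. a \<bullet> x \<le> b})"

definition integer_hull :: "(real^'n) set \<Rightarrow> (real^'n) set" where
  "integer_hull Q = convex hull (Q \<inter> int_points)"

definition integral_polyhedron :: "(real^'n) set \<Rightarrow> bool" where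
  "integral_polyhedron P \<longleftrightarrow> polyhedron P \<and> P = integer_hull P"

definition relaxation :: "(real^'n) set \<Rightarrow> (real^'n) set \<Rightarrow> bool" where
  "relaxation P Q \<longleftrightarrow> rational_polyhedron Q \<and> Q \<inter> int_points = P \<inter> int_points"

definition cg_closure :: "(real^'n) set \<Rightarrow> (real^'n) set" where
  "cg_closure Q = {x \<in> Q. \<forall>c \<delta>. int_vec c \<and> (\<forall>y\<in>Q. c \<bullet> y \<le> \<delta>)
                              \<longrightarrow> c \<bullet> x \<le> of_int \<lfloor>\<delta>\<rfloor>}"

definition cg_iter :: "nat \<Rightarrow> (real^'n) set \<Rightarrow> (real^'n) set" where
  "cg_iter k Q = (cg_closure ^^ k) Q"

end

theory Submission
  imports Defs
begin

text \<open>
  An integral polyhedron \<open>P\<close> is rational, so its affine hull is cut out by rational equations;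
  scaling one of them yields a primitive integer vector \<open>g\<close>, constant on \<open>P\<close>, together with an
  integer \<open>w\<close> such that \<open>g \<bullet> w = 1\<close>, and \<open>P\<close> contains a rational point \<open>z\<close> of its
  relative interior. Let \<open>Q\<close> consist of the points \<open>x\<close> at height \<open>h = g \<bullet> (x - z) \<in> [0, k + 1]\<close>
  for which \<open>x - h w\<close> lies in \<open>P\<close> shrunk towards \<open>z\<close> by the factor \<open>1 - h / (k + 2)\<close>.
  An integer point of \<open>Q\<close> at positive height would give the integer point \<open>x - h w\<close> in the
  relative interior of \<open>P\<close>, so \<open>Q\<close> is a relaxation of \<open>P\<close>. But \<open>z + (k + 1) w \<in> Q\<close>, and
  a CG cut can push the point \<open>z + j w\<close> back by at most one step \<open>w\<close>, since \<open>c \<bullet> w \<ge> 1\<close>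
  whenever \<open>c \<bullet> w > 0\<close>; hence \<open>z + w\<close> survives \<open>k\<close> rounds, and it lies outside
  \<open>aff P\<close> because \<open>g \<bullet> (z + w) = g \<bullet> z + 1\<close>.
\<close>

section \<open>Rational vectors and rational subspaces\<close>

definition rat_vec :: "real^'n \<Rightarrow> bool" where
  "rat_vec x \<longleftrightarrow> (\<forall>i. x $ i \<in> \<rat>)"

lemma int_vec_imp_rat_vec: "int_vec x \<Longrightarrow> rat_vec x"
  unfolding int_vec_def rat_vec_def using Ints_subset_Rats by blast

lemma rat_vec_add: "rat_vec x \<Longrightarrow> rat_vec y \<Longrightarrow> rat_vec (x + y)"
  and rat_vec_diff: "rat_vec x \<Longrightarrow> rat_vec y \<Longrightarrow> rat_vec (x - y)"
  and rat_vec_minus: "rat_vec x \<Longrightarrow> rat_vec (- x)"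
  and rat_vec_scaleR: "c \<in> \<rat> \<Longrightarrow> rat_vec x \<Longrightarrow> rat_vec (c *\<^sub>R x)"
  and rat_vec_axis: "rat_vec (axis i 1)"
  and rat_vec_inner: "rat_vec x \<Longrightarrow> rat_vec y \<Longrightarrow> x \<bullet> y \<in> \<rat>"
  unfolding rat_vec_def inner_vec_def axis_def by (auto intro!: Rats_sum)

lemma rat_vec_sum: "(\<And>x. x \<in> A \<Longrightarrow> rat_vec (f x)) \<Longrightarrow> rat_vec (sum f A)"
  unfolding rat_vec_def by (auto intro!: Rats_sum)

lemma int_vec_diff: "int_vec x \<Longrightarrow> int_vec y \<Longrightarrow> int_vec (x - y)"
  and int_vec_scaleR: "c \<in> \<int> \<Longrightarrow> int_vec x \<Longrightarrow> int_vec (c *\<^sub>R x)"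
  and int_vec_axis: "int_vec (axis i 1)"
  and int_vec_inner: "int_vec x \<Longrightarrow> int_vec y \<Longrightarrow> x \<bullet> y \<in> \<int>"
  unfolding int_vec_def inner_vec_def axis_def by (auto intro!: Ints_sum)

lemma inner_span_eq_0: "(\<And>b. b \<in> B \<Longrightarrow> d \<bullet> b = 0) \<Longrightarrow> x \<in> span B \<Longrightarrow> d \<bullet> x = 0"
  using orthogonal_to_span[of x B d] unfolding orthogonal_def by blast

lemma rational_finite_spanning_subset:
  assumes "\<forall>v\<in>V. rat_vec (v::real^'n)"
  obtains B where "finite B" "B \<subseteq> V" "\<forall>b\<in>B. rat_vec b" "span B = span V"
proof -
  obtain B where B: "B \<subseteq> V" "independent B" "V \<subseteq> span B"
    using maximal_independent_subset by blast
  then have "span B = span V"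
    by (simp add: span_mono span_minimal subset_antisym)
  moreover have "finite B"
    using B(2) by (rule finiteI_independent)
  ultimately show ?thesis
    using B(1) assms by (intro that[of B]) auto
qed

lemma rat_vec_orthogonal_projection:
  assumes "finite B" "\<forall>b\<in>B. rat_vec b" "rat_vec u"
  shows "\<exists>p. rat_vec p \<and> p \<in> span B \<and> (\<forall>b\<in>B. (u - p) \<bullet> b = 0)"
  using assms
proof (induction B arbitrary: u rule: finite_induct)
  case empty
  then show ?case by (auto intro!: exI[of _ 0] simp: rat_vec_def)
next
  case (insert s B)
  have IH: "\<exists>p. rat_vec p \<and> p \<in> span B \<and> (\<forall>b\<in>B. (v - p) \<bullet> b = 0)" if "rat_vec v" for v
    using insert.IH insert.prems that by blast
  obtain ps where ps: "rat_vec ps" "ps \<in> span B" "\<forall>b\<in>B. (s - ps) \<bullet> b = 0"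
    using IH insert.prems by blast
  obtain p where p: "rat_vec p" "p \<in> span B" "\<forall>b\<in>B. (u - p) \<bullet> b = 0"
    using IH insert.prems by blast
  define s' where "s' = s - ps"
  define d where "d = u - p"
  define c where "c = (d \<bullet> s') / (s' \<bullet> s')"
  have "d \<bullet> ps = 0" "s' \<bullet> ps = 0"
    using inner_span_eq_0[OF _ ps(2)] p(3) ps(3) by (auto simp: d_def s'_def)
  moreover have "c * (s' \<bullet> s') = d \<bullet> s'"
    by (cases "s' = 0") (simp_all add: c_def)
  ultimately have "(u - (p + c *\<^sub>R s')) \<bullet> s = 0"
    unfolding d_def s'_def by (simp add: inner_diff_left inner_diff_right algebra_simps)
  moreover have "(u - (p + c *\<^sub>R s')) \<bullet> b = 0" if "b \<in> B" for b
    using p(3) ps(3) that by (simp add: d_def s'_def inner_diff_left algebra_simps)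
  moreover have "p + c *\<^sub>R s' \<in> span (insert s B)"
    using ps(2) p(2) span_mono[of B "insert s B"] unfolding s'_def
    by (intro span_add span_scale span_diff) (auto intro: span_base)
  moreover have "rat_vec (p + c *\<^sub>R s')"
    using insert.prems p(1) ps(1) unfolding c_def d_def s'_def
    by (intro rat_vec_add rat_vec_scaleR rat_vec_diff Rats_divide rat_vec_inner) auto
  ultimately show ?case
    by blast
qed

lemma rational_subspace_equations:
  assumes "finite B" "\<forall>b\<in>B. rat_vec (b::real^'n)"
  obtains C where "finite C" "\<forall>c\<in>C. rat_vec c" "span B = {y. \<forall>c\<in>C. c \<bullet> y = 0}"
proof -
  obtain pr where pr: "\<And>i. rat_vec (pr i) \<and> pr i \<in> span B \<and> (\<forall>b\<in>B. (axis i 1 - pr i) \<bullet> b = 0)"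
    using rat_vec_orthogonal_projection[OF assms rat_vec_axis] by metis
  define C where "C = range (\<lambda>i. axis i 1 - pr i)"
  have C_orth: "c \<bullet> y = 0" if "c \<in> C" "y \<in> span B" for c y
    using that pr by (auto simp: C_def intro: inner_span_eq_0)
  have "y \<in> span B" if y: "\<forall>c\<in>C. c \<bullet> y = 0" for y
  proof -
    obtain y1 y2 where y12: "y1 \<in> span B" "\<And>v. v \<in> span B \<Longrightarrow> orthogonal y2 v" "y = y1 + y2"
      using orthogonal_subspace_decomp_exists[of B y] by metis
    have "y2 $ i = 0" for i
    proof -
      have "(axis i 1 - pr i) \<bullet> y2 = 0"
        using y C_orth[OF _ y12(1)] y12(3) by (auto simp: C_def inner_add_right)
      moreover have "pr i \<bullet> y2 = 0"
        using y12(2)[of "pr i"] pr[of i] by (simp add: orthogonal_def inner_commute)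
      ultimately show ?thesis
        by (simp add: inner_diff_left inner_axis')
    qed
    then have "y2 = 0"
      by (simp add: vec_eq_iff)
    then show ?thesis
      using y12 by simp
  qed
  then have "span B = {y. \<forall>c\<in>C. c \<bullet> y = 0}"
    using C_orth by blast
  moreover have "\<forall>c\<in>C. rat_vec c"
    using pr by (auto simp: C_def intro: rat_vec_diff rat_vec_axis)
  ultimately show ?thesis
    by (intro that[of C]) (auto simp: C_def)
qed

lemma span_insert_eq_of_dim:
  fixes a :: "'a::euclidean_space"
  assumes "M \<subseteq> span B" "dim M + 1 = dim B" "a \<in> span B" "a \<notin> span M"
  shows "span (insert a M) = span B"
proof -
  have "dim (insert a M) = dim B"
    using assms(2,4) by (simp add: dim_insert)
  moreover have "insert a M \<subseteq> span B"
    using assms(1,3) by blast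
  ultimately show ?thesis
    using dim_eq_span[of "insert a M" "span B"] by simp
qed

text \<open>The normal \<open>a\<close> is unique up to scaling, and \<open>u - p\<close> is a rational normal, where
  \<open>u \<in> B - span M\<close> and \<open>p\<close> is its rational projection onto \<open>span M\<close>.\<close>
lemma rat_vec_multiple_of_normal:
  fixes a :: "real^'n"
  assumes rat: "\<forall>b\<in>B. rat_vec b" "\<forall>b\<in>M. rat_vec b"
    and MB: "M \<subseteq> span B" "dim M + 1 = dim B"
    and a: "a \<in> span B" "a \<noteq> 0" "\<forall>y\<in>M. a \<bullet> y = 0"
  shows "\<exists>\<mu>>0. rat_vec (\<mu> *\<^sub>R a)"
proof -
  have "a \<notin> span M"
    using a inner_span_eq_0[of M a a] by auto
  then have span_aM: "span (insert a M) = span B"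
    using span_insert_eq_of_dim MB a(1) by blast
  obtain u where u: "u \<in> B" "u \<notin> span M"
  proof (rule ccontr)
    assume "\<not> thesis"
    with that have "span B \<subseteq> span M"
      by (metis span_minimal subset_eq subspace_span)
    then show False
      using MB(2) dim_subset[of "span B" "span M"] by simp
  qed
  obtain M0 where M0: "finite M0" "\<forall>b\<in>M0. rat_vec b" "span M0 = span M"
    using rational_finite_spanning_subset[OF rat(2)] by metis
  obtain p where p: "rat_vec p" "p \<in> span M" "\<forall>y\<in>M0. (u - p) \<bullet> y = 0"
    using rat_vec_orthogonal_projection[OF M0(1,2)] u rat(1) M0(3) by blast
  define \<mu> where "\<mu> = ((u - p) \<bullet> a) / (a \<bullet> a)"
  define d where "d = (u - p) - \<mu> *\<^sub>R a"
  have "span M \<subseteq> span B"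
    using MB(1) by (metis span_minimal subspace_span)
  have "(u - p) \<bullet> y = 0" if "y \<in> M" for y
    using p(3) M0(3) that inner_span_eq_0[of M0 "u - p" y] span_superset[of M] by blast
  then have "d \<bullet> y = 0" if "y \<in> insert a M" for y
    using that a by (auto simp: d_def \<mu>_def inner_diff_left)
  moreover have "d \<in> span (insert a M)"
    unfolding span_aM d_def using u(1) p(2) a(1) \<open>span M \<subseteq> span B\<close>
    by (intro span_diff span_scale) (auto intro: span_base)
  ultimately have "d = 0"
    using inner_span_eq_0[of "insert a M" d d] by simp
  then have u_p: "u - p = \<mu> *\<^sub>R a"
    by (simp add: d_def)
  have "rat_vec (u - p)"
    using u(1) rat(1) p(1) by (blast intro: rat_vec_diff)
  moreover have "\<mu> \<noteq> 0"
    using u_p u(2) p(2) by auto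
  ultimately show ?thesis
    unfolding u_p by (cases "\<mu> > 0") (auto intro!: exI[of _ "\<bar>\<mu>\<bar>"] dest: rat_vec_minus)
qed

section \<open>Integral polyhedra are rational\<close>

lemma affine_hull_iff_span_diff:
  assumes "q \<in> S"
  shows "x \<in> affine hull S \<longleftrightarrow> x - q \<in> span ((\<lambda>y. y - q) ` S)"
proof -
  have "affine hull S = (\<lambda>y. q + y) ` span ((\<lambda>y. - q + y) ` S)"
    using assms by (intro affine_hull_span_gen hull_inc)
  then show ?thesis
    by (auto simp: image_iff) (metis add.commute diff_add_cancel)
qed

lemma affine_hull_int_points_equations:
  fixes S :: "(real^'n) set"
  assumes "S \<subseteq> int_points" "q \<in> S"
  obtains C where "finite C" "\<forall>c\<in>C. rat_vec c" "affine hull S = {x. \<forall>c\<in>C. c \<bullet> x = c \<bullet> q}"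
proof -
  have "\<forall>v\<in>(\<lambda>y. y - q) ` S. rat_vec v"
    using assms by (auto simp: int_points_def intro!: int_vec_imp_rat_vec int_vec_diff)
  then obtain B where B: "finite B" "\<forall>b\<in>B. rat_vec b" "span B = span ((\<lambda>y. y - q) ` S)"
    by (rule rational_finite_spanning_subset)
  obtain C where C: "finite C" "\<forall>c\<in>C. rat_vec c" "span B = {y. \<forall>c\<in>C. c \<bullet> y = 0}"
    using rational_subspace_equations[OF B(1,2)] by blast
  have "x \<in> affine hull S \<longleftrightarrow> (\<forall>c\<in>C. c \<bullet> x = c \<bullet> q)" for x
    unfolding affine_hull_iff_span_diff[OF assms(2)] B(3)[symmetric] C(3)
    by (simp add: inner_diff_right)
  then have "affine hull S = {x. \<forall>c\<in>C. c \<bullet> x = c \<bullet> q}"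
    by blast
  with C show ?thesis
    by (intro that[of C]) auto
qed

lemma face_of_convex_hull_eq_hull_Int:
  fixes S :: "(real^'n) set"
  assumes T: "T face_of convex hull S"
  shows "T = convex hull (S \<inter> T)"
proof (rule subset_antisym)
  show "convex hull (S \<inter> T) \<subseteq> T"
    using face_of_imp_convex[OF T] by (simp add: hull_minimal)
  show "T \<subseteq> convex hull (S \<inter> T)"
  proof
    fix x assume "x \<in> T"
    then have "x \<in> convex hull S"
      using T face_of_imp_subset by blast
    then obtain S' where S': "finite S'" "S' \<subseteq> S" "x \<in> convex hull S'"
      using caratheodory[of S] by auto
    have "convex hull S \<inter> convex hull S' = convex hull S'"
      using S'(2) hull_mono[of S' S convex] by blast
    then have "(T \<inter> convex hull S') face_of convex hull S'"
      using face_of_slice[OF T convex_convex_hull, of S'] by simp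
    then obtain S'' where S'': "S'' \<subseteq> S'" "T \<inter> convex hull S' = convex hull S''"
      using face_of_convex_hull_subset[of S'] S'(1) finite_imp_compact by metis
    then have "S'' \<subseteq> S \<inter> T"
      using S'(2) hull_subset[of S'' convex] by blast
    moreover have "x \<in> convex hull S''"
      using S''(2) S'(3) \<open>x \<in> T\<close> by blast
    ultimately show "x \<in> convex hull (S \<inter> T)"
      using hull_mono[of S'' "S \<inter> T" convex] by blast
  qed
qed

lemma aff_dim_convex_hull_eq_dim_diff:
  fixes S :: "(real^'n) set"
  assumes "t \<in> S"
  shows "aff_dim (convex hull S) = int (dim ((\<lambda>x. x - t) ` S))"
proof -
  have "(+) (- t) = (\<lambda>x. x - t)"
    by auto
  then show ?thesis
    using aff_dim_eq_dim[OF hull_inc[OF assms]] by (simp add: aff_dim_convex_hull)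
qed

lemma facet_of_convex_hull_dim_diff:
  fixes S :: "(real^'n) set"
  assumes T: "T facet_of convex hull S" and t: "t \<in> S" "t \<in> T"
  shows "dim ((\<lambda>x. x - t) ` (S \<inter> T)) + 1 = dim ((\<lambda>x. x - t) ` S)"
proof -
  have "T = convex hull (S \<inter> T)"
    using T by (intro face_of_convex_hull_eq_hull_Int facet_of_imp_face_of)
  then have "aff_dim T = int (dim ((\<lambda>x. x - t) ` (S \<inter> T)))"
    using aff_dim_convex_hull_eq_dim_diff[of t "S \<inter> T"] t by simp
  moreover have "aff_dim (convex hull S) = int (dim ((\<lambda>x. x - t) ` S))"
    using aff_dim_convex_hull_eq_dim_diff[OF t(1)] .
  ultimately show ?thesis
    using T unfolding facet_of_def by linarith
qed

lemma facet_of_convex_hull_int_points_rational: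
  fixes S :: "(real^'n) set"
  assumes S: "S \<subseteq> int_points" and T: "T facet_of convex hull S"
    and Ta: "T \<subseteq> {x. a \<bullet> x = b}" and "a \<noteq> 0"
    and a_parallel: "\<forall>x\<in>affine hull S. x + a \<in> affine hull S"
  shows "\<exists>\<mu>>0. rat_vec (\<mu> *\<^sub>R a) \<and> \<mu> * b \<in> \<rat>"
proof -
  have "T = convex hull (S \<inter> T)"
    using T by (intro face_of_convex_hull_eq_hull_Int facet_of_imp_face_of)
  moreover have "T \<noteq> {}"
    using T by (simp add: facet_of_def)
  ultimately have "S \<inter> T \<noteq> {}"
    by (metis convex_hull_empty)
  then obtain t where t: "t \<in> S" "t \<in> T"
    by blast
  have int_t: "int_vec t"
    using t S by (auto simp: int_points_def)
  define V where "V = (\<lambda>x. x - t) ` S"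
  define VT where "VT = (\<lambda>x. x - t) ` (S \<inter> T)"
  have "\<forall>v\<in>V. rat_vec v" "\<forall>v\<in>VT. rat_vec v"
    using S int_t by (auto simp: V_def VT_def int_points_def intro!: int_vec_imp_rat_vec int_vec_diff)
  moreover have "VT \<subseteq> span V"
    unfolding V_def VT_def by (auto intro: span_base)
  moreover have "dim VT + 1 = dim V"
    unfolding V_def VT_def using facet_of_convex_hull_dim_diff[OF T t] .
  moreover have "a \<in> span V"
    using a_parallel hull_inc[OF t(1)] affine_hull_iff_span_diff[OF t(1), of "t + a"]
    by (simp add: V_def)
  moreover have "\<forall>y\<in>VT. a \<bullet> y = 0"
    using Ta t(2) by (auto simp: VT_def inner_diff_right subset_iff)
  ultimately obtain \<mu> where \<mu>: "\<mu> > 0" "rat_vec (\<mu> *\<^sub>R a)"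
    using rat_vec_multiple_of_normal \<open>a \<noteq> 0\<close> by blast
  moreover have "\<mu> * b = (\<mu> *\<^sub>R a) \<bullet> t"
    using Ta t(2) by auto
  ultimately show ?thesis
    using int_t by (metis int_vec_imp_rat_vec rat_vec_inner)
qed

lemma polyhedron_facet_inequalities:
  fixes P :: "'a::euclidean_space set"
  assumes "polyhedron P"
  obtains F :: "'a set set" and a b where "finite F" "P = affine hull P \<inter> {x. \<forall>h\<in>F. a h \<bullet> x \<le> b h}"
    "\<And>h. h \<in> F \<Longrightarrow> a h \<noteq> 0" "\<And>h. h \<in> F \<Longrightarrow> \<forall>x\<in>affine hull P. x + a h \<in> affine hull P"
    "\<And>h. h \<in> F \<Longrightarrow> (P \<inter> {x. a h \<bullet> x = b h}) facet_of P"
proof -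
  obtain F where F: "finite F" "P = affine hull P \<inter> \<Inter>F"
    "\<forall>h\<in>F. \<exists>a b. a \<noteq> 0 \<and> h = {x. a \<bullet> x \<le> b} \<and> (\<forall>x\<in>affine hull P. x + a \<in> affine hull P)"
    "\<forall>F'. F' \<subset> F \<longrightarrow> P \<subset> affine hull P \<inter> \<Inter>F'"
    using assms unfolding polyhedron_Int_affine_parallel_minimal by blast
  obtain a b where ab: "\<And>h. h \<in> F \<Longrightarrow> a h \<noteq> 0 \<and> h = {x. a h \<bullet> x \<le> b h} \<and>
      (\<forall>x\<in>affine hull P. x + a h \<in> affine hull P)"
    using F(3) by metis
  have facet_iff: "C facet_of P \<longleftrightarrow> (\<exists>h. h \<in> F \<and> C = P \<inter> {x. a h \<bullet> x = b h})" for C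
  proof (rule facet_of_polyhedron_explicit[OF F(1,2)])
    show "\<And>h. h \<in> F \<Longrightarrow> a h \<noteq> 0 \<and> h = {x. a h \<bullet> x \<le> b h}"
      using ab by blast
    show "\<And>F'. F' \<subset> F \<Longrightarrow> P \<subset> affine hull P \<inter> \<Inter>F'"
      using F(4) by simp
  qed
  have "x \<in> \<Inter>F \<longleftrightarrow> (\<forall>h\<in>F. a h \<bullet> x \<le> b h)" for x
    using ab by auto
  then have "P = affine hull P \<inter> {x. \<forall>h\<in>F. a h \<bullet> x \<le> b h}"
    using F(2) by blast
  with F(1) show ?thesis
    using ab facet_iff by (intro that[of F a b]) auto
qed

lemma rational_polyhedron_equations_inequalities:
  fixes q :: "real^'n"
  assumes C: "finite C" "\<forall>c\<in>C. rat_vec c" "rat_vec q"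
    and F: "finite F" "\<forall>h\<in>F. rat_vec (a h) \<and> b h \<in> \<rat>"
  shows "rational_polyhedron {x. (\<forall>c\<in>C. c \<bullet> x = c \<bullet> q) \<and> (\<forall>h\<in>F. a h \<bullet> x \<le> b h)}"
proof -
  define G where "G = (\<lambda>c. (c, c \<bullet> q)) ` C \<union> (\<lambda>c. (- c, - (c \<bullet> q))) ` C \<union> (\<lambda>h. (a h, b h)) ` F"
  have "(\<forall>(a', b')\<in>G. a' \<bullet> x \<le> b') \<longleftrightarrow> (\<forall>c\<in>C. c \<bullet> x = c \<bullet> q) \<and> (\<forall>h\<in>F. a h \<bullet> x \<le> b h)" for x
    unfolding G_def ball_Un Ball_image_comp by (auto intro: order.antisym)
  moreover have "\<forall>c\<in>C. c \<bullet> q \<in> \<rat>"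
    using C(2,3) by (blast intro: rat_vec_inner)
  then have "\<forall>(a', b')\<in>G. rat_vec a' \<and> b' \<in> \<rat>"
    using C(2) F(2) by (auto simp: G_def intro: rat_vec_minus)
  ultimately show ?thesis
    unfolding rational_polyhedron_def rat_vec_def using C(1) F(1) by (intro exI[of _ G]) (auto simp: G_def)
qed

lemma rational_polyhedron_convex_hull_int_points:
  fixes S :: "(real^'n) set"
  assumes poly: "polyhedron (convex hull S)" and S: "S \<subseteq> int_points"
  shows "rational_polyhedron (convex hull S)"
proof (cases "S = {}")
  case True
  then have "convex hull S = {x. \<forall>(a, b)\<in>{(0, -1)}. a \<bullet> x \<le> b}"
    by simp
  then show ?thesis
    unfolding rational_polyhedron_def by (intro exI[of _ "{(0, -1)}"]) auto
next
  case False
  then obtain q where q: "q \<in> S"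
    by blast
  then have "rat_vec q"
    using S by (auto simp: int_points_def intro: int_vec_imp_rat_vec)
  obtain C where C: "finite C" "\<forall>c\<in>C. rat_vec c" "affine hull S = {x. \<forall>c\<in>C. c \<bullet> x = c \<bullet> q}"
    using affine_hull_int_points_equations[OF S q] by blast
  obtain F :: "(real^'n) set set" and a b where F: "finite F"
      "convex hull S = affine hull (convex hull S) \<inter> {x. \<forall>h\<in>F. a h \<bullet> x \<le> b h}"
    and a: "\<And>h. h \<in> F \<Longrightarrow> a h \<noteq> 0"
      "\<And>h. h \<in> F \<Longrightarrow> \<forall>x\<in>affine hull (convex hull S). x + a h \<in> affine hull (convex hull S)"
    and facet: "\<And>h. h \<in> F \<Longrightarrow> (convex hull S \<inter> {x. a h \<bullet> x = b h}) facet_of convex hull S"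
    by (rule polyhedron_facet_inequalities[OF poly]) (rule that)
  have "\<exists>\<mu>>0. rat_vec (\<mu> *\<^sub>R a h) \<and> \<mu> * b h \<in> \<rat>" if "h \<in> F" for h
    using a[OF that] by (intro facet_of_convex_hull_int_points_rational[OF S facet[OF that]])
      (auto simp: affine_hull_convex_hull)
  then obtain \<mu> where \<mu>: "\<And>h. h \<in> F \<Longrightarrow> \<mu> h > 0 \<and> rat_vec (\<mu> h *\<^sub>R a h) \<and> \<mu> h * b h \<in> \<rat>"
    by metis
  have "convex hull S = affine hull S \<inter> {x. \<forall>h\<in>F. a h \<bullet> x \<le> b h}"
    using F(2) by (simp only: affine_hull_convex_hull)
  also have "\<dots> = {x. (\<forall>c\<in>C. c \<bullet> x = c \<bullet> q) \<and> (\<forall>h\<in>F. (\<mu> h *\<^sub>R a h) \<bullet> x \<le> \<mu> h * b h)}"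
    using \<mu> by (auto simp: C(3) mult_le_cancel_left_pos)
  finally have hull_eq: "convex hull S =
      {x. (\<forall>c\<in>C. c \<bullet> x = c \<bullet> q) \<and> (\<forall>h\<in>F. (\<mu> h *\<^sub>R a h) \<bullet> x \<le> \<mu> h * b h)}" .
  show ?thesis
    unfolding hull_eq using \<mu> by (intro rational_polyhedron_equations_inequalities[OF C(1,2) \<open>rat_vec q\<close> F(1)]) auto
qed

lemma rat_vec_normal_of_affine_hull_int_points:
  fixes S :: "(real^'n) set"
  assumes "S \<subseteq> int_points" "q \<in> S" "aff_dim S < int CARD('n)"
  obtains r where "rat_vec r" "r \<noteq> 0" "\<forall>x\<in>affine hull S. r \<bullet> x = r \<bullet> q"
proof -
  obtain C where C: "finite C" "\<forall>c\<in>C. rat_vec c" "affine hull S = {x. \<forall>c\<in>C. c \<bullet> x = c \<bullet> q}"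
    using affine_hull_int_points_equations[OF assms(1,2)] by blast
  have "\<exists>c\<in>C. c \<noteq> 0"
  proof (rule ccontr)
    assume "\<not> (\<exists>c\<in>C. c \<noteq> 0)"
    then have "affine hull S = UNIV"
      using C(3) by auto
    then have "aff_dim S = int CARD('n)"
      by (metis aff_dim_UNIV aff_dim_affine_hull DIM_cart DIM_real mult.right_neutral)
    then show False
      using assms(3) by simp
  qed
  then show ?thesis
    using C(2,3) that by blast
qed

lemma rat_vec_in_rel_interior_convex_hull:
  fixes S :: "(real^'n) set"
  assumes "S \<subseteq> int_points" "S \<noteq> {}"
  obtains z where "rat_vec z" "z \<in> rel_interior (convex hull S)"
proof -
  obtain B where B: "B \<subseteq> S" "\<not> affine_dependent B" "affine hull S = affine hull B"
    using affine_basis_exists[of S] by blast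
  have "finite B"
    using B(2) by (rule aff_independent_finite)
  moreover have "B \<noteq> {}"
    using B(3) assms(2) affine_hull_eq_empty by blast
  ultimately have "card B > 0"
    by (simp add: card_gt_0_iff)
  define z where "z = (\<Sum>x\<in>B. (1 / card B) *\<^sub>R x)"
  have "z \<in> rel_interior (convex hull B)"
    unfolding rel_interior_convex_hull_explicit[OF B(2)] z_def
    using \<open>card B > 0\<close> by (intro CollectI exI[of _ "\<lambda>_. 1 / card B"]) auto
  moreover have "rel_interior (convex hull B) \<subseteq> rel_interior (convex hull S)"
    using B(1,3) by (intro subset_rel_interior hull_mono) (auto simp: affine_hull_convex_hull)
  moreover have "rat_vec z"
    using B(1) assms(1) unfolding z_def
    by (intro rat_vec_sum rat_vec_scaleR) (auto simp: int_points_def intro: int_vec_imp_rat_vec)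
  ultimately show ?thesis
    using that by blast
qed

section \<open>Primitive integer normals\<close>

lemma int_vec_multiple_of_rat_vec:
  assumes "rat_vec (r::real^'n)"
  obtains D :: int where "D > 0" "int_vec (of_int D *\<^sub>R r)"
proof -
  have "\<exists>d::int. d > 0 \<and> of_int d * r $ i \<in> \<int>" for i
  proof -
    obtain a b :: int where "b > 0" "r $ i = of_int a / of_int b"
      using assms Rats_cases' unfolding rat_vec_def by metis
    then show ?thesis
      by (intro exI[of _ b]) auto
  qed
  then obtain d where d: "\<And>i. d i > (0::int) \<and> of_int (d i) * r $ i \<in> \<int>"
    by metis
  have "int_vec (of_int (\<Prod>i\<in>UNIV. d i) *\<^sub>R r)"
    unfolding int_vec_def
  proof
    fix i
    have "(\<Prod>j\<in>UNIV. d j) = d i * (\<Prod>j\<in>UNIV - {i}. d j)"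
      by (simp add: prod.remove)
    then have "(of_int (\<Prod>j\<in>UNIV. d j) *\<^sub>R r) $ i = of_int (\<Prod>j\<in>UNIV - {i}. d j) * (of_int (d i) * r $ i)"
      by (simp add: ac_simps)
    then show "(of_int (\<Prod>j\<in>UNIV. d j) *\<^sub>R r) $ i \<in> \<int>"
      using d by (metis Ints_mult Ints_of_int)
  qed
  moreover have "(\<Prod>i\<in>UNIV. d i) > 0"
    using d by (simp add: prod_pos)
  ultimately show ?thesis
    using that by blast
qed

text \<open>If \<open>m\<close> is the least positive value of \<open>g \<bullet> w\<close> over integer vectors \<open>w\<close>, then \<open>m\<close>
  divides every entry of \<open>g\<close>, as the remainder \<open>g $ j mod m\<close> is again such a value.\<close>
lemma int_vec_divide_least_inner:
  assumes g: "int_vec (g::real^'n)" and w: "int_vec w" "g \<bullet> w = real m" "m > 0"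
    and least: "\<And>k v. int_vec v \<Longrightarrow> g \<bullet> v = real k \<Longrightarrow> k > 0 \<Longrightarrow> m \<le> k"
  shows "int_vec ((1 / real m) *\<^sub>R g)"
  unfolding int_vec_def
proof
  fix j
  obtain b where b: "g $ j = of_int b"
    using g unfolding int_vec_def by (metis Ints_cases)
  define r where "r = b mod int m"
  define v where "v = axis j 1 - of_int (b div int m) *\<^sub>R w"
  have v: "int_vec v"
    unfolding v_def by (intro int_vec_diff int_vec_scaleR int_vec_axis w(1)) auto
  have r: "0 \<le> r" "r < int m"
    using w(3) by (simp_all add: r_def)
  have "g \<bullet> v = of_int r"
    using w(2) b by (simp add: v_def r_def inner_diff_right inner_axis minus_div_mult_eq_mod[symmetric])
  then have gv: "g \<bullet> v = real (nat r)"
    using r(1) by simp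
  have "r = 0"
  proof (rule ccontr)
    assume "r \<noteq> 0"
    then have "m \<le> nat r"
      using least[OF v gv] r(1) by simp
    then show False
      using r by (simp add: le_nat_iff)
  qed
  then obtain k where "b = int m * k"
    unfolding r_def by (metis mod_eq_0_iff_dvd dvdE)
  then show "((1 / real m) *\<^sub>R g) $ j \<in> \<int>"
    using b w(3) by simp
qed

lemma int_vec_primitive_divisor:
  assumes g: "int_vec (g::real^'n)" and "g \<noteq> 0"
  obtains m :: nat and w where "m > 0" "int_vec ((1 / real m) *\<^sub>R g)" "int_vec w" "g \<bullet> w = real m"
proof -
  define M where "M = {k::nat. k > 0 \<and> (\<exists>w. int_vec w \<and> g \<bullet> w = real k)}"
  obtain i where "g $ i \<noteq> 0"
    using \<open>g \<noteq> 0\<close> by (metis vec_eq_iff zero_index)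
  moreover obtain a where a: "g $ i = of_int a"
    using g unfolding int_vec_def by (metis Ints_cases)
  moreover have "int_vec (of_int (sgn a) *\<^sub>R axis i 1)"
    by (intro int_vec_scaleR int_vec_axis) auto
  moreover have "g \<bullet> (of_int (sgn a) *\<^sub>R axis i 1) = real (nat \<bar>a\<bar>)"
    using a by (simp add: inner_axis abs_if sgn_if)
  ultimately have "nat \<bar>a\<bar> \<in> M"
    unfolding M_def by auto
  define m where "m = (LEAST k. k \<in> M)"
  have "m \<in> M"
    unfolding m_def using \<open>nat \<bar>a\<bar> \<in> M\<close> by (rule LeastI)
  then obtain w where w: "m > 0" "int_vec w" "g \<bullet> w = real m"
    unfolding M_def by blast
  have "m \<le> k" if "int_vec v" "g \<bullet> v = real k" "k > 0" for k v
    unfolding m_def using that by (intro Least_le) (auto simp: M_def)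
  then show ?thesis
    using int_vec_divide_least_inner[OF g w(2,3,1)] w that by blast
qed

lemma rat_vec_primitive_multiple:
  assumes "rat_vec (r::real^'n)" "r \<noteq> 0"
  obtains c w where "c \<noteq> 0" "int_vec (c *\<^sub>R r)" "int_vec w" "(c *\<^sub>R r) \<bullet> w = 1"
proof -
  obtain D :: int where D: "D > 0" "int_vec (of_int D *\<^sub>R r)"
    using int_vec_multiple_of_rat_vec[OF assms(1)] by blast
  moreover have "of_int D *\<^sub>R r \<noteq> 0"
    using D assms by simp
  ultimately obtain m :: nat and w where m: "m > 0" "int_vec ((1 / real m) *\<^sub>R of_int D *\<^sub>R r)"
    "int_vec w" "(of_int D *\<^sub>R r) \<bullet> w = real m"
    using int_vec_primitive_divisor by metis
  then show ?thesis
    using D that[of "of_int D / real m" w] by auto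
qed

lemma integral_polyhedron_lattice_data:
  fixes P :: "(real^'n) set"
  assumes "integral_polyhedron P" "P \<noteq> {}" "aff_dim P < int CARD('n)"
  obtains F z g w where "finite F" "\<forall>(a, b)\<in>F. rat_vec a \<and> b \<in> \<rat>" "P = {x. \<forall>(a, b)\<in>F. a \<bullet> x \<le> b}"
    "rat_vec z" "z \<in> rel_interior P" "int_vec g" "int_vec w" "g \<bullet> w = 1" "g \<bullet> z \<in> \<int>"
    "\<forall>x\<in>affine hull P. g \<bullet> x = g \<bullet> z"
proof -
  define S where "S = P \<inter> int_points"
  have poly: "polyhedron (convex hull S)" and S: "S \<subseteq> int_points" and PS: "P = convex hull S"
    using assms(1) by (auto simp: integral_polyhedron_def integer_hull_def S_def)
  then obtain q where q: "q \<in> S"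
    using assms(2) by fastforce
  obtain F where F: "finite F" "\<forall>(a, b)\<in>F. rat_vec a \<and> b \<in> \<rat>" "P = {x. \<forall>(a, b)\<in>F. a \<bullet> x \<le> b}"
    using rational_polyhedron_convex_hull_int_points[OF poly S]
    unfolding rational_polyhedron_def rat_vec_def PS by blast
  obtain z where z: "rat_vec z" "z \<in> rel_interior P"
    using rat_vec_in_rel_interior_convex_hull[OF S] q PS by blast
  obtain r where r: "rat_vec r" "r \<noteq> 0" "\<forall>x\<in>affine hull P. r \<bullet> x = r \<bullet> q"
    using rat_vec_normal_of_affine_hull_int_points[OF S q] assms(3)
    by (metis PS aff_dim_convex_hull affine_hull_convex_hull)
  obtain c w where gw: "int_vec (c *\<^sub>R r)" "int_vec w" "(c *\<^sub>R r) \<bullet> w = 1"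
    using rat_vec_primitive_multiple[OF r(1,2)] by blast
  have "z \<in> affine hull P"
    using z(2) rel_interior_subset[of P] hull_subset[of P affine] by blast
  then have g_aff: "\<forall>x\<in>affine hull P. (c *\<^sub>R r) \<bullet> x = (c *\<^sub>R r) \<bullet> z"
    using r(3) by simp
  have "q \<in> affine hull P" "int_vec q"
    using q S PS hull_subset[of S convex] hull_subset[of P affine] by (auto simp: int_points_def)
  then have "(c *\<^sub>R r) \<bullet> z \<in> \<int>"
    using g_aff int_vec_inner[OF gw(1)] by metis
  with F z gw g_aff show ?thesis
    by (intro that[of F z "c *\<^sub>R r" w]) auto
qed

section \<open>Chvatal-Gomory closures along an integral ray\<close>

lemma cg_closure_subset: "cg_closure R \<subseteq> R"
  unfolding cg_closure_def by blast

lemma convex_cg_closure: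
  assumes "convex R"
  shows "convex (cg_closure R)"
proof -
  have "cg_closure R = R \<inter> \<Inter>{{x. c \<bullet> x \<le> of_int \<lfloor>\<delta>\<rfloor>} | c \<delta>. int_vec c \<and> (\<forall>y\<in>R. c \<bullet> y \<le> \<delta>)}"
    unfolding cg_closure_def by blast
  then show ?thesis
    using assms by (auto intro!: convex_Int convex_Inter simp: convex_halfspace_le)
qed

lemma integer_hull_subset_cg_closure:
  assumes "convex R"
  shows "integer_hull R \<subseteq> cg_closure R"
  unfolding integer_hull_def
proof (rule hull_minimal)
  show "convex (cg_closure R)"
    using assms by (rule convex_cg_closure)
  show "R \<inter> int_points \<subseteq> cg_closure R"
  proof
    fix p assume p: "p \<in> R \<inter> int_points"
    have "c \<bullet> p \<le> of_int \<lfloor>\<delta>\<rfloor>" if "int_vec c" "\<forall>y\<in>R. c \<bullet> y \<le> \<delta>" for c \<delta>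
    proof -
      have "c \<bullet> p \<in> \<int>"
        using p that(1) by (auto simp: int_points_def intro: int_vec_inner)
      then obtain k where "c \<bullet> p = of_int k"
        by (rule Ints_cases)
      moreover have "c \<bullet> p \<le> \<delta>"
        using p that(2) by blast
      ultimately show ?thesis
        by (simp add: le_floor_iff)
    qed
    then show "p \<in> cg_closure R"
      using p unfolding cg_closure_def by blast
  qed
qed

text \<open>A CG cut \<open>c\<close> with \<open>c \<bullet> w > 0\<close> has \<open>c \<bullet> w \<ge> 1\<close>, as \<open>w\<close> is integral; so it
  cannot cut off more than one step along \<open>w\<close>.\<close>
lemma cg_closure_ray_step:
  assumes R: "convex R" and z: "z \<in> cg_closure R" and w: "int_vec w" and "0 \<le> t"
    and zt: "z + (t + 1) *\<^sub>R w \<in> R"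
  shows "z + t *\<^sub>R w \<in> cg_closure R"
proof -
  have "(1 - t / (t + 1)) *\<^sub>R z + (t / (t + 1)) *\<^sub>R (z + (t + 1) *\<^sub>R w) =
      z + (t / (t + 1) * (t + 1)) *\<^sub>R w"
    by (simp add: scaleR_add_right scaleR_diff_left)
  also have "t / (t + 1) * (t + 1) = t"
    using \<open>0 \<le> t\<close> by simp
  finally have "z + t *\<^sub>R w = (1 - t / (t + 1)) *\<^sub>R z + (t / (t + 1)) *\<^sub>R (z + (t + 1) *\<^sub>R w)"
    by simp
  then have "z + t *\<^sub>R w \<in> R"
    using R z zt cg_closure_subset \<open>0 \<le> t\<close> by (auto intro!: convexD)
  moreover have "c \<bullet> (z + t *\<^sub>R w) \<le> of_int \<lfloor>\<delta>\<rfloor>" if c: "int_vec c" "\<forall>y\<in>R. c \<bullet> y \<le> \<delta>" for c \<delta>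
  proof (cases "c \<bullet> w \<le> 0")
    case True
    moreover have "c \<bullet> z \<le> of_int \<lfloor>\<delta>\<rfloor>"
      using z c unfolding cg_closure_def by blast
    moreover have "t * (c \<bullet> w) \<le> 0"
      using \<open>0 \<le> t\<close> True by (rule mult_nonneg_nonpos)
    ultimately show ?thesis
      by (simp add: inner_add_right)
  next
    case False
    have "c \<bullet> w \<in> \<int>"
      using c(1) w by (rule int_vec_inner)
    with False have "c \<bullet> w \<ge> 1"
      by (metis Ints_cases int_one_le_iff_zero_less not_le of_int_le_iff of_int_0_less_iff of_int_1)
    moreover have "c \<bullet> (z + (t + 1) *\<^sub>R w) \<le> \<delta>"
      using c(2) zt by blast
    ultimately show ?thesis
      by (simp add: inner_add_right algebra_simps) linarith
  qed
  ultimately show ?thesis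
    unfolding cg_closure_def by blast
qed

lemma cg_iter_Suc: "cg_iter (Suc k) Q = cg_closure (cg_iter k Q)"
  by (simp add: cg_iter_def)

lemma convex_cg_iter: "convex Q \<Longrightarrow> convex (cg_iter k Q)"
  by (induction k) (simp_all add: cg_iter_def convex_cg_closure)

lemma integral_subset_cg_iter:
  assumes "P = integer_hull P" "P \<subseteq> Q" "convex Q"
  shows "P \<subseteq> cg_iter k Q"
proof (induction k)
  case 0
  then show ?case
    using assms(2) by (simp add: cg_iter_def)
next
  case (Suc k)
  have "integer_hull P \<subseteq> integer_hull (cg_iter k Q)"
    unfolding integer_hull_def using Suc.IH by (intro hull_mono) blast
  also have "\<dots> \<subseteq> cg_iter (Suc k) Q"
    unfolding cg_iter_Suc using assms(3) by (intro integer_hull_subset_cg_closure convex_cg_iter)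
  finally show ?case
    using assms(1) by simp
qed

lemma cg_iter_ray:
  assumes "P = integer_hull P" "P \<subseteq> Q" "convex Q" "z \<in> P" "int_vec w"
    and "z + real (j + k) *\<^sub>R w \<in> Q"
  shows "z + real j *\<^sub>R w \<in> cg_iter k Q"
  using assms(6)
proof (induction k arbitrary: j)
  case 0
  then show ?case
    by (simp add: cg_iter_def)
next
  case (Suc k)
  then have "z + (real j + 1) *\<^sub>R w \<in> cg_iter k Q"
    using Suc.IH[of "Suc j"] by (simp add: add.commute)
  moreover have "z \<in> cg_iter (Suc k) Q"
    using integral_subset_cg_iter[OF assms(1-3)] assms(4) by blast
  ultimately show ?case
    unfolding cg_iter_Suc using assms(3,5)
    by (intro cg_closure_ray_step convex_cg_iter) (auto simp: cg_iter_Suc)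
qed

section \<open>The tilted relaxation\<close>

lemma convex_halfspace_system: "convex {x. \<forall>(a, b)\<in>F. a \<bullet> x \<le> b}"
proof -
  have "{x. \<forall>(a, b)\<in>F. a \<bullet> x \<le> b} = \<Inter>((\<lambda>(a, b). {x. a \<bullet> x \<le> b}) ` F)"
    by auto
  then show ?thesis
    by (auto intro!: convex_Inter simp: convex_halfspace_le)
qed

lemma rational_polyhedron_imp_convex: "rational_polyhedron Q \<Longrightarrow> convex Q"
  unfolding rational_polyhedron_def using convex_halfspace_system by blast

lemma rel_interior_shrunk_inequalities:
  fixes y :: "'a::euclidean_space"
  assumes P: "P = {x. \<forall>(a, b)\<in>F. a \<bullet> x \<le> b}" and z: "z \<in> rel_interior P"
    and t: "0 < t" "t < 1" and y: "\<forall>(a, b)\<in>F. a \<bullet> y \<le> b + t * (a \<bullet> z - b)"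
  shows "y \<in> rel_interior P"
proof -
  define p where "p = (1 / (1 - t)) *\<^sub>R (y - t *\<^sub>R z)"
  have "a \<bullet> p \<le> b" if "(a, b) \<in> F" for a b
  proof -
    have "a \<bullet> y - t * (a \<bullet> z) \<le> (1 - t) * b"
      using y that by (auto simp: algebra_simps)
    then show ?thesis
      using t by (simp add: p_def inner_diff_right divide_simps mult.commute)
  qed
  then have p: "p \<in> P"
    unfolding P by blast
  moreover have "(1 - t) *\<^sub>R p = y - t *\<^sub>R z"
    using t by (simp add: p_def)
  then have "y = p - t *\<^sub>R (p - z)"
    by (simp add: algebra_simps)
  moreover have "convex P"
    unfolding P by (rule convex_halfspace_system)
  ultimately show ?thesis
    using rel_interior_convex_shrink[OF _ z p t(1)] t(2) by simp
qed

text \<open>Write \<open>P\<close> for the polyhedron described by \<open>F\<close>. At height \<open>h = g \<bullet> (x - z)\<close> above \<open>P\<close>,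
  the point \<open>x\<close> moved back by \<open>h *\<^sub>R w\<close> has to lie in the copy of \<open>P\<close> shrunk towards \<open>z\<close>
  by the factor \<open>1 - h / (s + 1)\<close>.\<close>
definition tilted_relaxation ::
    "((real^'n) \<times> real) set \<Rightarrow> real^'n \<Rightarrow> real^'n \<Rightarrow> real^'n \<Rightarrow> nat \<Rightarrow> (real^'n) set" where
  "tilted_relaxation F z g w s = {x. 0 \<le> g \<bullet> (x - z) \<and> g \<bullet> (x - z) \<le> real s \<and>
     (\<forall>(a, b)\<in>F. a \<bullet> (x - (g \<bullet> (x - z)) *\<^sub>R w) \<le> b + g \<bullet> (x - z) / (real s + 1) * (a \<bullet> z - b))}"

lemma rational_polyhedron_tilted_relaxation:
  assumes F: "finite F" "\<forall>(a, b)\<in>F. rat_vec a \<and> b \<in> \<rat>"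
    and rat: "rat_vec z" "rat_vec g" "rat_vec w"
  shows "rational_polyhedron (tilted_relaxation F z g w s)"
proof -
  define \<kappa> where "\<kappa> a b = a \<bullet> w + (a \<bullet> z - b) / (real s + 1)" for a b
  define FQ where "FQ = insert (- g, - (g \<bullet> z)) (insert (g, real s + g \<bullet> z)
    ((\<lambda>(a, b). (a - \<kappa> a b *\<^sub>R g, b - \<kappa> a b * (g \<bullet> z))) ` F))"
  have "(a - \<kappa> a b *\<^sub>R g) \<bullet> x \<le> b - \<kappa> a b * (g \<bullet> z) \<longleftrightarrow>
      a \<bullet> (x - (g \<bullet> (x - z)) *\<^sub>R w) \<le> b + g \<bullet> (x - z) / (real s + 1) * (a \<bullet> z - b)" for a b x
  proof -
    have "(a - \<kappa> a b *\<^sub>R g) \<bullet> x - (b - \<kappa> a b * (g \<bullet> z)) = a \<bullet> x - b - g \<bullet> (x - z) * \<kappa> a b"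
      by (simp add: inner_diff_left inner_diff_right algebra_simps)
    moreover have "a \<bullet> (x - (g \<bullet> (x - z)) *\<^sub>R w) - (b + g \<bullet> (x - z) / (real s + 1) * (a \<bullet> z - b)) =
        a \<bullet> x - b - g \<bullet> (x - z) * \<kappa> a b"
      by (simp add: \<kappa>_def inner_diff_right algebra_simps)
    ultimately show ?thesis
      by linarith
  qed
  then have "tilted_relaxation F z g w s = {x. \<forall>(a, b)\<in>FQ. a \<bullet> x \<le> b}"
    by (auto simp: tilted_relaxation_def FQ_def inner_diff_right)
  moreover have "\<kappa> a b \<in> \<rat>" if "rat_vec a" "b \<in> \<rat>" for a b
    using that rat by (simp add: \<kappa>_def rat_vec_inner)
  then have "\<forall>(a, b)\<in>FQ. rat_vec a \<and> b \<in> \<rat>"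
    using F(2) rat
    by (auto simp: FQ_def rat_vec_inner intro!: rat_vec_minus rat_vec_diff rat_vec_scaleR)
  ultimately show ?thesis
    unfolding rational_polyhedron_def rat_vec_def using F(1)
    by (intro exI[of _ FQ]) (auto simp: FQ_def)
qed

lemma subset_tilted_relaxation:
  assumes "P = {x. \<forall>(a, b)\<in>F. a \<bullet> x \<le> b}" "\<forall>x\<in>P. g \<bullet> x = g \<bullet> z"
  shows "P \<subseteq> tilted_relaxation F z g w s"
  using assms by (auto simp: tilted_relaxation_def inner_diff_right)

lemma tilted_relaxation_apex:
  assumes "P = {x. \<forall>(a, b)\<in>F. a \<bullet> x \<le> b}" "z \<in> P" "g \<bullet> w = 1"
  shows "z + real s *\<^sub>R w \<in> tilted_relaxation F z g w s"
proof -
  have "a \<bullet> z \<le> b + real s / (real s + 1) * (a \<bullet> z - b)" if "(a, b) \<in> F" for a b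
  proof -
    have "a \<bullet> z \<le> b"
      using assms(1,2) that by blast
    then have "(1 - real s / (real s + 1)) * (a \<bullet> z - b) \<le> 0"
      by (intro mult_nonneg_nonpos) auto
    then show ?thesis
      by (simp add: algebra_simps)
  qed
  then show ?thesis
    using assms(3) by (auto simp: tilted_relaxation_def)
qed

lemma tilted_relaxation_int_points:
  assumes P: "P = {x. \<forall>(a, b)\<in>F. a \<bullet> x \<le> b}" and z: "z \<in> rel_interior P"
    and g: "int_vec g" "g \<bullet> z \<in> \<int>" and w: "int_vec w" "g \<bullet> w = 1"
    and no_int: "rel_interior P \<inter> int_points = {}"
  shows "tilted_relaxation F z g w s \<inter> int_points \<subseteq> P"
proof
  fix x assume "x \<in> tilted_relaxation F z g w s \<inter> int_points"
  then have x: "int_vec x" "0 \<le> g \<bullet> (x - z)" "g \<bullet> (x - z) \<le> real s"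
    and x_ineq: "\<forall>(a, b)\<in>F. a \<bullet> (x - (g \<bullet> (x - z)) *\<^sub>R w) \<le> b + g \<bullet> (x - z) / (real s + 1) * (a \<bullet> z - b)"
    by (auto simp: tilted_relaxation_def int_points_def)
  define h where "h = g \<bullet> (x - z)"
  show "x \<in> P"
  proof (cases "h = 0")
    case True
    then show ?thesis
      using x_ineq by (simp add: P h_def)
  next
    case False
    have "0 < h / (real s + 1)" "h / (real s + 1) < 1"
      using False x(2,3) by (simp_all add: h_def)
    moreover have "\<forall>(a, b)\<in>F. a \<bullet> (x - h *\<^sub>R w) \<le> b + h / (real s + 1) * (a \<bullet> z - b)"
      using x_ineq by (simp add: h_def)
    ultimately have "x - h *\<^sub>R w \<in> rel_interior P"
      using rel_interior_shrunk_inequalities[OF P z] by blast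
    moreover have "h \<in> \<int>"
      using g x(1) by (simp add: h_def inner_diff_right int_vec_inner)
    then have "int_vec (x - h *\<^sub>R w)"
      using x(1) w(1) by (intro int_vec_diff int_vec_scaleR)
    ultimately show ?thesis
      using no_int by (auto simp: int_points_def)
  qed
qed

lemma relaxation_tilted_relaxation:
  assumes F: "finite F" "\<forall>(a, b)\<in>F. rat_vec a \<and> b \<in> \<rat>" "P = {x. \<forall>(a, b)\<in>F. a \<bullet> x \<le> b}"
    and z: "rat_vec z" "z \<in> rel_interior P"
    and g: "int_vec g" "g \<bullet> z \<in> \<int>" "\<forall>x\<in>P. g \<bullet> x = g \<bullet> z"
    and w: "int_vec w" "g \<bullet> w = 1"
    and no_int: "rel_interior P \<inter> int_points = {}"
  shows "relaxation P (tilted_relaxation F z g w s)"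
  unfolding relaxation_def
proof
  show "rational_polyhedron (tilted_relaxation F z g w s)"
    using F(1,2) z(1) g(1) w(1) by (intro rational_polyhedron_tilted_relaxation) (auto intro: int_vec_imp_rat_vec)
  have "P \<subseteq> tilted_relaxation F z g w s"
    using F(3) g(3) by (rule subset_tilted_relaxation)
  moreover have "tilted_relaxation F z g w s \<inter> int_points \<subseteq> P"
    using F(3) z(2) g(1,2) w no_int by (rule tilted_relaxation_int_points)
  ultimately show "tilted_relaxation F z g w s \<inter> int_points = P \<inter> int_points"
    by blast
qed

lemma cg_iter_tilted_relaxation:
  assumes "P = integer_hull P"
    and F: "finite F" "\<forall>(a, b)\<in>F. rat_vec a \<and> b \<in> \<rat>" "P = {x. \<forall>(a, b)\<in>F. a \<bullet> x \<le> b}"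
    and z: "rat_vec z" "z \<in> P" and g: "int_vec g" "\<forall>x\<in>P. g \<bullet> x = g \<bullet> z"
    and w: "int_vec w" "g \<bullet> w = 1"
  shows "z + w \<in> cg_iter k (tilted_relaxation F z g w (Suc k))"
proof -
  have convex: "convex (tilted_relaxation F z g w (Suc k))"
    using F(1,2) z(1) g(1) w(1)
    by (intro rational_polyhedron_imp_convex rational_polyhedron_tilted_relaxation) (auto intro: int_vec_imp_rat_vec)
  have subset: "P \<subseteq> tilted_relaxation F z g w (Suc k)"
    using F(3) g(2) by (rule subset_tilted_relaxation)
  have "z + real (1 + k) *\<^sub>R w \<in> tilted_relaxation F z g w (Suc k)"
    using tilted_relaxation_apex[OF F(3) z(2) w(2), of "Suc k"] by simp
  then show ?thesis
    using cg_iter_ray[OF assms(1) subset convex z(2) w(1), of 1 k] by simp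
qed

theorem theorem2:
  fixes P :: "(real^'n) set"
  assumes "integral_polyhedron P"
    and "P \<noteq> {}"
    and "aff_dim P < int CARD('n)"
    and "rel_interior P \<inter> int_points = {}"
  shows "\<forall>k::nat. \<exists>Q. relaxation P Q \<and> \<not> (cg_iter k Q \<subseteq> affine hull P)"
proof
  fix k :: nat
  obtain F z g w where F: "finite F" "\<forall>(a, b)\<in>F. rat_vec a \<and> b \<in> \<rat>" "P = {x. \<forall>(a, b)\<in>F. a \<bullet> x \<le> b}"
    and z: "rat_vec z" "z \<in> rel_interior P" and gw: "int_vec g" "int_vec w" "g \<bullet> w = 1" "g \<bullet> z \<in> \<int>"
    and g_aff: "\<forall>x\<in>affine hull P. g \<bullet> x = g \<bullet> z"
    using integral_polyhedron_lattice_data[OF assms(1-3)] by blast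
  have g_P: "\<forall>x\<in>P. g \<bullet> x = g \<bullet> z"
    using g_aff hull_subset[of P affine] by blast
  have "P = integer_hull P" "z \<in> P"
    using assms(1) z(2) rel_interior_subset by (auto simp: integral_polyhedron_def)
  then have "z + w \<in> cg_iter k (tilted_relaxation F z g w (Suc k))"
    by (rule cg_iter_tilted_relaxation[OF _ F z(1) _ gw(1) g_P gw(2,3)])
  moreover have "relaxation P (tilted_relaxation F z g w (Suc k))"
    by (rule relaxation_tilted_relaxation[OF F z gw(1,4) g_P gw(2,3) assms(4)])
  moreover have "z + w \<notin> affine hull P"
    using g_aff gw(3) by (auto simp: inner_add_right)
  ultimately show "\<exists>Q. relaxation P Q \<and> \<not> cg_iter k Q \<subseteq> affine hull P"
    by blast
qed

end
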